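(* For all positive integers $l,m,n$, the multigraph $K_{m,n}^l$ is an abelian $G$-graph.
   Context: $K_{m,n}^l$ is the loopless multigraph with vertex set partitioned into a part of $m$ vertices and a part of $n$ vertices, in which every vertex of the first part is joined to every vertex of the second part by exactly $l$ parallel edges, and there are no other edges. For a group $G$ and a multiset $S$ of elements of $G$, $\Phi(G,S)$ is the multigraph whose vertex set is the union over the members $s$ of $S$ (with multiplicity) of $V_s=\{\langle s\rangle x: x\in G\}$ (right cosets), with, for $\langle s\rangle x\in V_s$, $\langle t\rangle y\in V_t$, $s,t$ distinct members of $S$, one edge labeled $g$ between them for each $g\in\langle s\rangle x\cap\langle t\rangle y$, and no other edges. An abelian $G$-graph is a multigraph isomorphic (ignoring labels) to $\Phi(G,S)$ for some abelian group $G$ and multiset $S$. *)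

theory Defs
  imports "HOL-Algebra.Algebra"
begin

text \<open>A loopless multigraph is represented by a vertex set V together with a
 symmetric multiplicity function mu, where mu x y is the number of parallel
 edges between x and y.\<close>

definition mg_iso :: "'v set \<Rightarrow> ('v \<Rightarrow> 'v \<Rightarrow> nat) \<Rightarrow> 'w set \<Rightarrow> ('w \<Rightarrow> 'w \<Rightarrow> nat) \<Rightarrow> bool" where
  "mg_iso V mu W nu \<longleftrightarrow>
     (\<exists>f. bij_betw f V W \<and> (\<forall>x\<in>V. \<forall>y\<in>V. mu x y = nu (f x) (f y)))"

definition K_verts :: "nat \<Rightarrow> nat \<Rightarrow> (nat + nat) set" where
  "K_verts m n = Inl ` {..<m} \<union> Inr ` {..<n}"

definition K_mult :: "nat \<Rightarrow> (nat + nat) \<Rightarrow> (nat + nat) \<Rightarrow> nat" where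
  "K_mult l x y =
     (case (x, y) of (Inl _, Inr _) \<Rightarrow> l | (Inr _, Inl _) \<Rightarrow> l | _ \<Rightarrow> 0)"

text \<open>Phi(G,S): S is a multiset of group elements, given as a list (order is
 irrelevant up to isomorphism).\<close>

definition Phi_verts :: "('g, 'b) monoid_scheme \<Rightarrow> 'g list \<Rightarrow> (nat \<times> 'g set) set" where
  "Phi_verts G S = {(i, C) | i C. i < length S \<and> C \<in> rcosets\<^bsub>G\<^esub> (generate G {S ! i})}"

definition Phi_mult :: "(nat \<times> 'g set) \<Rightarrow> (nat \<times> 'g set) \<Rightarrow> nat" where
  "Phi_mult u v = (if fst u \<noteq> fst v then card (snd u \<inter> snd v) else 0)"

definition abelian_G_graph :: "'v set \<Rightarrow> ('v \<Rightarrow> 'v \<Rightarrow> nat) \<Rightarrow> bool" where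
  "abelian_G_graph V mu \<longleftrightarrow>
     (\<exists>(G :: nat monoid) S. comm_group G \<and> finite (carrier G) \<and> set S \<subseteq> carrier G \<and>
        mg_iso V mu (Phi_verts G S) Phi_mult)"

end

theory Submission
  imports Defs
begin

text \<open>Let \<open>A = \<langle>s\<rangle>\<close> and \<open>B = \<langle>t\<rangle>\<close> be cyclic subgroups of a finite abelian group \<open>G\<close>
  with \<open>AB = G\<close>. Then every coset of \<open>A\<close> meets every coset of \<open>B\<close> in a coset of
  \<open>A \<inter> B\<close>, so \<open>\<Phi>(G, {s, t})\<close> is the complete bipartite multigraph on the \<open>|G : A|\<close>
  cosets of \<open>A\<close> and the \<open>|G : B|\<close> cosets of \<open>B\<close>, with edge multiplicity \<open>|A \<inter> B|\<close>.
  For \<open>K\<^sup>l\<^sub>m\<^sub>,\<^sub>n\<close> write \<open>d = gcd m n\<close>, \<open>m = m' d\<close>, \<open>n = n' d\<close> and choose \<open>x, y\<close>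
  with \<open>m' x - n' y = 1\<close>. In \<open>\<int>\<^sub>d \<times> \<int>\<^sub>M\<close> with \<open>M = m' n' d l\<close> (order \<open>mnl\<close>) the
  elements \<open>s = (y, m')\<close> and \<open>t = (x, n')\<close> have orders \<open>nl\<close> and \<open>ml\<close>, and the
  Bezout relation makes both standard generators of \<open>\<int>\<^sub>d \<times> \<int>\<^sub>M\<close> lie in \<open>\<langle>s\<rangle>\<langle>t\<rangle>\<close>.
  Counting then gives indices \<open>m\<close>, \<open>n\<close> and \<open>|A \<inter> B| = l\<close>.\<close>

lemma (in comm_group) card_rcos_Int_rcos:
  assumes A: "subgroup A G" and B: "subgroup B G" and AB: "A <#> B = carrier G"
    and C: "C \<in> rcosets A" and D: "D \<in> rcosets B"
  shows "card (C \<inter> D) = card (A \<inter> B)"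
proof -
  obtain u where u: "u \<in> carrier G" "C = A #> u" using C unfolding RCOSETS_def by auto
  obtain v where v: "v \<in> carrier G" "D = B #> v" using D unfolding RCOSETS_def by auto
  have "v \<otimes> inv u \<in> A <#> B" using u v AB by auto
  then obtain a b where ab: "a \<in> A" "b \<in> B" "v \<otimes> inv u = a \<otimes> b"
    unfolding set_mult_def by auto
  have a: "a \<in> carrier G" using subgroup.mem_carrier[OF A ab(1)] .
  have b: "b \<in> carrier G" using subgroup.mem_carrier[OF B ab(2)] .
  \<comment> \<open>\<open>AB = G\<close> yields a common representative \<open>z\<close> of \<open>C\<close> and \<open>D\<close>.\<close>
  define z where "z = a \<otimes> u"
  have z: "z \<in> carrier G" using a u by (simp add: z_def)
  have "v = (v \<otimes> inv u) \<otimes> u" using u v by (simp add: m_assoc)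
  also have "\<dots> = b \<otimes> z" using ab(3) a b u by (metis z_def m_assoc m_comm)
  finally have "v = b \<otimes> z" .
  hence "z = inv b \<otimes> v" using b z v by (simp add: inv_solve_left)
  hence "z \<in> B #> v" using ab(2) B unfolding r_coset_def by (auto intro: subgroup.m_inv_closed)
  hence D': "D = B #> z" using repr_independence[OF _ v(1) B] v(2) by simp
  have "z \<in> A #> u" using ab(1) unfolding z_def r_coset_def by auto
  hence C': "C = A #> z" using repr_independence[OF _ u(1) A] u(2) by simp
  have "C \<inter> D = (A \<inter> B) #> z"
  proof
    show "C \<inter> D \<subseteq> (A \<inter> B) #> z"
    proof
      fix w assume "w \<in> C \<inter> D"
      then obtain a' b' where "a' \<in> A" "b' \<in> B" "w = a' \<otimes> z" "w = b' \<otimes> z"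
        unfolding C' D' r_coset_def by blast
      moreover have "a' = b'"
        using calculation A B z by (metis r_cancel subgroup.mem_carrier)
      ultimately show "w \<in> (A \<inter> B) #> z" unfolding r_coset_def by blast
    qed
  qed (auto simp: C' D' r_coset_def)
  moreover have "(A \<inter> B) #> z \<in> rcosets (A \<inter> B)" using z unfolding RCOSETS_def by auto
  ultimately show ?thesis
    using card_rcosets_equal A subgroup.subset by (metis Int_lower1 dual_order.trans)
qed

lemma (in comm_group) card_subgroup_eq_index_mult_card_Int:
  assumes fin: "finite (carrier G)" and A: "subgroup A G" and B: "subgroup B G"
    and AB: "A <#> B = carrier G"
  shows "card A = card (rcosets B) * card (A \<inter> B)"
proof -
  have "A \<in> rcosets A" using A by (metis coset_mult_one rcosetsI subgroup.subset one_closed)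
  hence same: "card (A \<inter> D) = card (A \<inter> B)" if "D \<in> rcosets B" for D
    using card_rcos_Int_rcos[OF A B AB] that by simp
  have "A = (\<Union>D\<in>rcosets B. A \<inter> D)"
    using rcosets_part_G[OF B] subgroup.subset[OF A] by auto
  also have "card \<dots> = (\<Sum>D\<in>rcosets B. card (A \<inter> D))"
  proof (rule card_UN_disjoint)
    show "finite (rcosets B)" using fin by (simp add: RCOSETS_def)
    show "\<forall>D\<in>rcosets B. finite (A \<inter> D)"
      using fin A by (meson finite_Int finite_subset subgroup.subset)
    show "\<forall>D\<in>rcosets B. \<forall>D'\<in>rcosets B. D \<noteq> D' \<longrightarrow> A \<inter> D \<inter> (A \<inter> D') = {}"
      using rcos_disjoint[OF B] by (auto simp: pairwise_def disjnt_def)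
  qed
  finally show ?thesis using same by simp
qed

lemma Phi_verts_pair:
  fixes G (structure)
  shows "Phi_verts G [s, t] = {0} \<times> rcosets (generate G {s}) \<union> {1} \<times> rcosets (generate G {t})"
  unfolding Phi_verts_def by (auto simp: less_Suc_eq numeral_2_eq_2)

lemma mg_iso_K_two_families:
  assumes "finite Cs" and "finite Ds" and "\<And>C D. C \<in> Cs \<Longrightarrow> D \<in> Ds \<Longrightarrow> card (C \<inter> D) = c"
  shows "mg_iso (K_verts (card Cs) (card Ds)) (K_mult c) ({0} \<times> Cs \<union> {1} \<times> Ds) Phi_mult"
proof -
  obtain f where f: "bij_betw f {0..<card Cs} Cs" using ex_bij_betw_nat_finite[OF assms(1)] by blast
  obtain h where h: "bij_betw h {0..<card Ds} Ds" using ex_bij_betw_nat_finite[OF assms(2)] by blast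
  define F where "F = case_sum (\<lambda>i. (0::nat, f i)) (\<lambda>j. (1, h j))"
  have "bij_betw F (Inl ` {..<card Cs}) ({0} \<times> Cs)"
    using f unfolding F_def bij_betw_def inj_on_def by (auto simp: atLeast0LessThan image_image)
      (metis image_eqI imageE)
  moreover have "bij_betw F (Inr ` {..<card Ds}) ({1} \<times> Ds)"
    using h unfolding F_def bij_betw_def inj_on_def by (auto simp: atLeast0LessThan image_image)
      (metis image_eqI imageE)
  ultimately have "bij_betw F (K_verts (card Cs) (card Ds)) ({0} \<times> Cs \<union> {1} \<times> Ds)"
    unfolding K_verts_def by (rule bij_betw_combine) auto
  moreover have "K_mult c u v = Phi_mult (F u) (F v)" if "u \<in> K_verts (card Cs) (card Ds)"
    and "v \<in> K_verts (card Cs) (card Ds)" for u v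
    using that f h assms(3) unfolding K_verts_def
    by (auto simp: F_def K_mult_def Phi_mult_def Int_commute bij_betwE)
  ultimately show ?thesis unfolding mg_iso_def by blast
qed

lemma abelian_G_graph_K_from_cyclic_subgroups:
  fixes G :: "nat monoid" (structure)
  assumes cg: "comm_group G" and fin: "finite (carrier G)"
    and s: "s \<in> carrier G" and t: "t \<in> carrier G"
    and prod: "generate G {s} <#> generate G {t} = carrier G"
    and card_s: "card (generate G {s}) = n * l" and card_t: "card (generate G {t}) = m * l"
    and order: "order G = m * n * l"
    and pos: "0 < l" "0 < m" "0 < n"
  shows "abelian_G_graph (K_verts m n) (K_mult l)"
proof -
  interpret comm_group G by (rule cg)
  define A where "A = generate G {s}"
  define B where "B = generate G {t}"
  have A: "subgroup A G" and B: "subgroup B G"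
    unfolding A_def B_def using s t by (auto intro: generate_is_subgroup)
  have "card (rcosets A) * (n * l) = m * n * l"
    using lagrange[OF A] card_s order by (simp add: A_def)
  hence m: "card (rcosets A) = m" using pos by simp
  have "card (rcosets B) * (m * l) = m * n * l"
    using lagrange[OF B] card_t order by (simp add: B_def)
  hence n: "card (rcosets B) = n" using pos by simp
  have "n * l = n * card (A \<inter> B)"
    using card_subgroup_eq_index_mult_card_Int[OF fin A B] prod card_s n by (simp add: A_def B_def)
  hence l: "card (A \<inter> B) = l" using pos by simp
  have "mg_iso (K_verts m n) (K_mult l) (Phi_verts G [s, t]) Phi_mult"
    using mg_iso_K_two_families[of "rcosets A" "rcosets B" l] card_rcos_Int_rcos[OF A B] prod fin
    unfolding Phi_verts_pair m n l by (simp add: A_def B_def RCOSETS_def)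
  thus ?thesis
    unfolding abelian_G_graph_def using cg fin s t by (intro exI[of _ G] exI[of _ "[s, t]"]) auto
qed

text \<open>The group \<open>\<int>\<^sub>g \<times> \<int>\<^sub>M\<close>, encoded on \<open>{..<g * M}\<close> by \<open>(a, b) \<mapsto> a + g * b\<close>;
  \<open>mod_pair g M a b\<close> is the code of \<open>(a mod g, b mod M)\<close>.\<close>

definition mod_pair :: "nat \<Rightarrow> nat \<Rightarrow> nat \<Rightarrow> nat \<Rightarrow> nat" where
  "mod_pair g M a b = a mod g + g * (b mod M)"

definition mod_pair_group :: "nat \<Rightarrow> nat \<Rightarrow> nat monoid" where
  "mod_pair_group g M =
     \<lparr>carrier = {..<g * M},
      monoid.mult = (\<lambda>u v. mod_pair g M (u mod g + v mod g) (u div g + v div g)),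
      one = 0\<rparr>"

context
  fixes g M :: nat
  assumes pos: "0 < g" "0 < M"
begin

lemma mod_pair_mod: "mod_pair g M a b mod g = a mod g"
  and mod_pair_div: "mod_pair g M a b div g = b mod M"
  using pos by (simp_all add: mod_pair_def)

lemma mod_pair_eq_iff:
  "mod_pair g M a b = mod_pair g M c d \<longleftrightarrow> a mod g = c mod g \<and> b mod M = d mod M"
  by (metis mod_pair_def mod_pair_div mod_pair_mod)

lemma mod_pair_in_carrier: "mod_pair g M a b \<in> carrier (mod_pair_group g M)"
proof -
  have "a mod g + g * (b mod M) < g + g * (b mod M)" using pos by simp
  also have "\<dots> = g * (Suc (b mod M))" by simp
  also have "\<dots> \<le> g * M" using pos by (intro mult_le_mono2) (simp add: Suc_leI)
  finally show ?thesis by (simp add: mod_pair_def mod_pair_group_def)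
qed

lemma mod_pair_of_carrier:
  "u \<in> carrier (mod_pair_group g M) \<Longrightarrow> u = mod_pair g M (u mod g) (u div g)"
  by (simp add: mod_pair_def mod_pair_group_def less_mult_imp_div_less mult.commute)

lemma one_mod_pair_group: "\<one>\<^bsub>mod_pair_group g M\<^esub> = mod_pair g M 0 0"
  by (simp add: mod_pair_def mod_pair_group_def)

lemma mult_mod_pair:
  "mod_pair g M a b \<otimes>\<^bsub>mod_pair_group g M\<^esub> mod_pair g M c d = mod_pair g M (a + c) (b + d)"
  by (simp add: mod_pair_group_def mod_pair_mod mod_pair_div mod_pair_eq_iff mod_add_eq)

lemma comm_group_mod_pair_group: "comm_group (mod_pair_group g M)"
proof (rule comm_groupI)
  fix x y z
  assume "x \<in> carrier (mod_pair_group g M)" "y \<in> carrier (mod_pair_group g M)"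
    "z \<in> carrier (mod_pair_group g M)"
  then obtain a b c d e f where "x = mod_pair g M a b" "y = mod_pair g M c d" "z = mod_pair g M e f"
    using mod_pair_of_carrier by metis
  thus "x \<otimes>\<^bsub>mod_pair_group g M\<^esub> y \<otimes>\<^bsub>mod_pair_group g M\<^esub> z =
        x \<otimes>\<^bsub>mod_pair_group g M\<^esub> (y \<otimes>\<^bsub>mod_pair_group g M\<^esub> z)"
    by (simp add: mult_mod_pair add.assoc)
next
  fix x y
  assume "x \<in> carrier (mod_pair_group g M)" "y \<in> carrier (mod_pair_group g M)"
  then obtain a b c d where "x = mod_pair g M a b" "y = mod_pair g M c d"
    using mod_pair_of_carrier by metis
  thus "x \<otimes>\<^bsub>mod_pair_group g M\<^esub> y \<in> carrier (mod_pair_group g M)"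
    and "x \<otimes>\<^bsub>mod_pair_group g M\<^esub> y = y \<otimes>\<^bsub>mod_pair_group g M\<^esub> x"
    by (simp_all add: mult_mod_pair mod_pair_in_carrier add.commute)
next
  show "\<one>\<^bsub>mod_pair_group g M\<^esub> \<in> carrier (mod_pair_group g M)"
    by (simp add: one_mod_pair_group mod_pair_in_carrier)
next
  fix x assume "x \<in> carrier (mod_pair_group g M)"
  then obtain a b where x: "x = mod_pair g M a b" using mod_pair_of_carrier by blast
  show "\<one>\<^bsub>mod_pair_group g M\<^esub> \<otimes>\<^bsub>mod_pair_group g M\<^esub> x = x"
    by (simp add: x one_mod_pair_group mult_mod_pair)
  have "mod_pair g M ((g - 1) * a) ((M - 1) * b) \<otimes>\<^bsub>mod_pair_group g M\<^esub> x = \<one>\<^bsub>mod_pair_group g M\<^esub>"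
    using pos by (simp add: x one_mod_pair_group mult_mod_pair mod_pair_eq_iff algebra_simps)
  thus "\<exists>y\<in>carrier (mod_pair_group g M). y \<otimes>\<^bsub>mod_pair_group g M\<^esub> x = \<one>\<^bsub>mod_pair_group g M\<^esub>"
    using mod_pair_in_carrier by blast
qed

lemma pow_mod_pair: "mod_pair g M a b [^]\<^bsub>mod_pair_group g M\<^esub> k = mod_pair g M (k * a) (k * b)"
  by (induction k) (simp_all add: one_mod_pair_group mult_mod_pair add.commute)

lemma mod_pair_group_eq_set_mult:
  fixes G (structure)
  defines "G \<equiv> mod_pair_group g M"
  assumes bezout: "m' * x = n' * y + 1"
  shows "generate G {mod_pair g M y m'} <#> generate G {mod_pair g M x n'} = carrier G"
    (is "?A <#> ?B = _")
proof -
  interpret comm_group G unfolding G_def by (rule comm_group_mod_pair_group)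
  let ?s = "mod_pair g M y m'" and ?t = "mod_pair g M x n'"
  have in_carrier: "mod_pair g M a b \<in> carrier G" for a b
    unfolding G_def by (rule mod_pair_in_carrier)
  have mult: "mod_pair g M a b \<otimes> mod_pair g M c d = mod_pair g M (a + c) (b + d)" for a b c d
    unfolding G_def by (rule mult_mod_pair)
  have pow: "mod_pair g M a b [^] k = mod_pair g M (k * a) (k * b)" for a b and k :: nat
    unfolding G_def by (rule pow_mod_pair)
  have A: "subgroup ?A G" and B: "subgroup ?B G"
    by (simp_all add: generate_is_subgroup in_carrier)
  have AB: "subgroup (?A <#> ?B) G" by (rule mult_subgroups[OF A B])
  have pow_mem: "h [^] (k::nat) \<in> H" if "subgroup H G" "h \<in> H" for H h k
    using subgroup_int_pow_closed[OF that, of "int k"] by (simp add: int_pow_int)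
  have s: "?s [^] k \<in> ?A" and t: "?t [^] k \<in> ?B" for k :: nat
    by (intro pow_mem A B generate.incl singletonI)+
  have "?s [^] n' \<otimes> mod_pair g M 1 0 = ?t [^] m'"
    by (simp add: pow mult bezout mult.commute)
  hence "mod_pair g M 1 0 = inv (?s [^] n') \<otimes> ?t [^] m'"
    by (simp add: inv_solve_left in_carrier pow)
  hence e1: "mod_pair g M 1 0 \<in> ?A <#> ?B"
    unfolding set_mult_def using s t A by (blast intro: subgroup.m_inv_closed)
  have "?s [^] x = mod_pair g M 0 1 \<otimes> ?t [^] y"
    by (simp add: pow mult bezout mult.commute)
  hence "mod_pair g M 0 1 = ?s [^] x \<otimes> inv (?t [^] y)"
    by (simp add: inv_solve_right in_carrier pow)
  hence e2: "mod_pair g M 0 1 \<in> ?A <#> ?B"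
    unfolding set_mult_def using s t B by (blast intro: subgroup.m_inv_closed)
  have "z \<in> ?A <#> ?B" if "z \<in> carrier G" for z
  proof -
    have "z = mod_pair g M (z mod g) (z div g)"
      using that unfolding G_def by (rule mod_pair_of_carrier)
    also have "\<dots> = mod_pair g M 1 0 [^] (z mod g) \<otimes> mod_pair g M 0 1 [^] (z div g)"
      by (simp add: pow mult)
    finally have "z = mod_pair g M 1 0 [^] (z mod g) \<otimes> mod_pair g M 0 1 [^] (z div g)" .
    thus ?thesis using AB e1 e2 by (metis pow_mem subgroup.m_closed)
  qed
  thus ?thesis using subgroup.subset[OF AB] by blast
qed

end

lemma ord_mod_pair:
  fixes g a N z :: nat and G (structure)
  defines "G \<equiv> mod_pair_group g (a * N)"
  assumes "0 < g" "0 < a" "0 < N" "g dvd N"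
  shows "group.ord G (mod_pair g (a * N) z a) = N"
proof -
  have pos: "0 < a * N" using assms by simp
  interpret comm_group G unfolding G_def using comm_group_mod_pair_group[OF \<open>0 < g\<close> pos] .
  have "mod_pair g (a * N) z a [^] k = \<one> \<longleftrightarrow> N dvd k" for k
  proof -
    have "mod_pair g (a * N) z a [^] k = \<one> \<longleftrightarrow> g dvd k * z \<and> a * N dvd k * a"
      using assms pos by (simp add: pow_mod_pair one_mod_pair_group mod_pair_eq_iff dvd_eq_mod_eq_0)
    also have "\<dots> \<longleftrightarrow> N dvd k"
      using assms by (auto simp: mult.commute[of k a] intro: dvd_mult2 dvd_trans)
    finally show ?thesis .
  qed
  thus ?thesis using ord_unique mod_pair_in_carrier[OF \<open>0 < g\<close> pos] G_def by blast
qed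

theorem proposition6:
  fixes l m n :: nat
  assumes "l > 0" and "m > 0" and "n > 0"
  shows "abelian_G_graph (K_verts m n) (K_mult l)"
proof -
  define g where "g = gcd m n"
  have g: "0 < g" using assms by (simp add: g_def)
  obtain m' n' where mn: "m = m' * g" "n = n' * g" and "coprime m' n'"
    using gcd_coprime_exists[of m n] g unfolding g_def by blast
  hence pos: "0 < m'" "0 < n'" using assms by auto
  then obtain x y where bezout: "m' * x = n' * y + 1"
    using bezout_nat[of m' n'] \<open>coprime m' n'\<close> by auto
  define M where "M = m' * n' * g * l"
  have M: "0 < M" "M = m' * (n * l)" "M = n' * (m * l)"
    using pos g assms by (simp_all add: M_def mn)
  interpret comm_group "mod_pair_group g M" using comm_group_mod_pair_group[OF g M(1)] .
  have "card (generate (mod_pair_group g M) {mod_pair g M y m'}) = n * l"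
    using ord_mod_pair[of g m' "n * l" y] generate_pow_card mod_pair_in_carrier[OF g M(1)] g pos assms
    by (simp add: M(2) mn)
  moreover have "card (generate (mod_pair_group g M) {mod_pair g M x n'}) = m * l"
    using ord_mod_pair[of g n' "m * l" x] generate_pow_card mod_pair_in_carrier[OF g M(1)] g pos assms
    by (simp add: M(3) mn)
  moreover have "order (mod_pair_group g M) = m * n * l"
    by (simp add: order_def mod_pair_group_def M_def mn)
  moreover have "finite (carrier (mod_pair_group g M))" by (simp add: mod_pair_group_def)
  ultimately show ?thesis
    using abelian_G_graph_K_from_cyclic_subgroups[OF comm_group_mod_pair_group[OF g M(1)] _
        mod_pair_in_carrier[OF g M(1)] mod_pair_in_carrier[OF g M(1)]
        mod_pair_group_eq_set_mult[OF g M(1) bezout]] assms by blast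
qed

end
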